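(* Let $G$ be a dense $K_4^3\cup e$-free $3$-graph with $\lambda(G)>\frac{\sqrt3}{18}$. Then $G$ does not contain $K_5^3$ as a subgraph.
   Context: $K_4^3\cup e$ is the $3$-graph on $\{1,\dots,7\}$ with edges $\{123,124,134,234,567\}$. $K_5^3$ is the complete $3$-graph on $5$ vertices. For a $3$-graph $G$ on $[n]$, $\lambda(G)=\max\{\sum_{e\in E(G)}\prod_{i\in e}x_i:\sum_ix_i=1,x_i\ge0\}$. An $r$-graph $G$ is dense if $\lambda(G')<\lambda(G)$ for every proper subgraph $G'$ of $G$. *)

theory Defs
  imports Complex_Main
begin

definition three_graph :: "'a set \<Rightarrow> 'a set set \<Rightarrow> bool" where
  "three_graph V E \<longleftrightarrow> finite V \<and> (\<forall>e\<in>E. e \<subseteq> V \<and> card e = 3)"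

definition lagrangian :: "'a set \<Rightarrow> 'a set set \<Rightarrow> real" where
  "lagrangian V E =
     (if V = {} then 0 else
      Sup {(\<Sum>e\<in>E. \<Prod>i\<in>e. x i) | x. (\<forall>i\<in>V. x i \<ge> 0) \<and> (\<Sum>i\<in>V. x i) = 1})"

definition subgraph :: "'a set \<Rightarrow> 'a set set \<Rightarrow> 'a set \<Rightarrow> 'a set set \<Rightarrow> bool" where
  "subgraph V' E' V E \<longleftrightarrow> V' \<subseteq> V \<and> E' \<subseteq> E \<and> (\<forall>e\<in>E'. e \<subseteq> V')"

definition dense :: "'a set \<Rightarrow> 'a set set \<Rightarrow> bool" where
  "dense V E \<longleftrightarrow> (\<forall>V' E'. subgraph V' E' V E \<and> (V', E') \<noteq> (V, E)
                      \<longrightarrow> lagrangian V' E' < lagrangian V E)"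

definition contains_copy :: "'b set \<Rightarrow> 'b set set \<Rightarrow> 'a set \<Rightarrow> 'a set set \<Rightarrow> bool" where
  "contains_copy VF EF V E \<longleftrightarrow>
     (\<exists>f. inj_on f VF \<and> f ` VF \<subseteq> V \<and> (\<forall>e\<in>EF. f ` e \<in> E))"

definition K43e_V :: "nat set" where "K43e_V = {1..7}"
definition K43e_E :: "nat set set" where
  "K43e_E = {{1,2,3},{1,2,4},{1,3,4},{2,3,4},{5,6,7}}"

definition K53_V :: "nat set" where "K53_V = {1..5}"
definition K53_E :: "nat set set" where
  "K53_E = {e. e \<subseteq> {1..5} \<and> card e = 3}"

end

(* If G contains a copy S of K_5^3, an edge meeting S in at most one vertex would form a
   K_4^3 \<union> e together with four vertices of S that it misses. Hence every edge meets S in at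
   least two vertices, so for a weighting x on the simplex the edge polynomial is at most
   e3(x|S) + y e2(x|S), where y is the weight outside S. This is the third elementary symmetric
   polynomial of six nonnegative numbers summing to 1, which is at most C(6,3)/6^3 = 5/54, below
   sqrt 3 / 18. *)

theory Submission
  imports Defs
begin

definition elem_sym :: "nat \<Rightarrow> 'a set \<Rightarrow> ('a \<Rightarrow> 'b::comm_semiring_1) \<Rightarrow> 'b" where
  "elem_sym k A x = (\<Sum>T | T \<subseteq> A \<and> card T = k. \<Prod>i\<in>T. x i)"

lemma elem_sym_0 [simp]: "finite A \<Longrightarrow> elem_sym 0 A x = 1"
proof -
  assume "finite A"
  then have "{T. T \<subseteq> A \<and> card T = 0} = {{}}"
    by (auto dest: finite_subset)
  then show ?thesis by (simp add: elem_sym_def)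
qed

lemma elem_sym_Suc_empty [simp]:
  fixes x :: "'a \<Rightarrow> 'b::comm_semiring_1"
  shows "elem_sym (Suc k) {} x = 0"
proof -
  have "{T. T \<subseteq> ({} :: 'a set) \<and> card T = Suc k} = {}"
    by auto
  then show ?thesis
    unfolding elem_sym_def by (simp only: sum.empty)
qed

lemma elem_sym_insert [simp]:
  assumes "finite A" "a \<notin> A"
  shows "elem_sym (Suc k) (insert a A) x = elem_sym (Suc k) A x + x a * elem_sym k A x"
proof -
  let ?subsets = "\<lambda>k. {T. T \<subseteq> A \<and> card T = k}"
  have fin: "finite (?subsets k)" for k
    using assms(1) by simp
  have split: "{T. T \<subseteq> insert a A \<and> card T = Suc k} = ?subsets (Suc k) \<union> insert a ` ?subsets k"
  proof (intro equalityI subsetI)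
    fix T assume T: "T \<in> {T. T \<subseteq> insert a A \<and> card T = Suc k}"
    show "T \<in> ?subsets (Suc k) \<union> insert a ` ?subsets k"
    proof (cases "a \<in> T")
      case True
      then have "T = insert a (T - {a})" "T - {a} \<in> ?subsets k"
        using T assms(1) by (auto dest: finite_subset)
      then show ?thesis by blast
    qed (use T in auto)
  next
    fix T assume "T \<in> ?subsets (Suc k) \<union> insert a ` ?subsets k"
    then show "T \<in> {T. T \<subseteq> insert a A \<and> card T = Suc k}"
      using assms by (auto intro: card_insert_disjoint dest: finite_subset)
  qed
  have "inj_on (insert a) (?subsets k)"
    using assms(2) by (intro inj_onI) (metis subsetD Diff_insert_absorb mem_Collect_eq)
  moreover have "?subsets (Suc k) \<inter> insert a ` ?subsets k = {}"
    using assms(2) by auto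
  moreover have "(\<Prod>i\<in>insert a T. x i) = x a * (\<Prod>i\<in>T. x i)" if "T \<in> ?subsets k" for T
    using that assms by (metis (mono_tags) finite_subset mem_Collect_eq prod.insert subsetD)
  ultimately show ?thesis
    unfolding elem_sym_def split
    by (simp add: sum.union_disjoint fin sum.reindex sum_distrib_left)
qed

text \<open>Maclaurin's inequality for six variables, obtained from the Newton-type bound
  \<open>9 e3 \<le> 2 p e2\<close> and from \<open>12 e2 \<le> 5 p\<^sup>2\<close>, each certified by a sum of squares.\<close>

lemma e3_six_le:
  fixes a b c d e f :: real
  assumes "0 \<le> a" "0 \<le> b" "0 \<le> c" "0 \<le> d" "0 \<le> e" "0 \<le> f"
  defines "p \<equiv> a + b + c + d + e + f"
    and "e2 \<equiv> a*b + a*c + a*d + a*e + a*f + b*c + b*d + b*e + b*f + c*d + c*e + c*f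
              + d*e + d*f + e*f"
    and "e3 \<equiv> a*b*c + a*b*d + a*b*e + a*b*f + a*c*d + a*c*e + a*c*f + a*d*e + a*d*f + a*e*f
              + b*c*d + b*c*e + b*c*f + b*d*e + b*d*f + b*e*f + c*d*e + c*d*f + c*e*f + d*e*f"
  shows "216 * e3 \<le> 20 * p ^ 3"
proof -
  have "5 * p^2 - 12 * e2 = (a-b)^2 + (a-c)^2 + (a-d)^2 + (a-e)^2 + (a-f)^2 + (b-c)^2 + (b-d)^2
      + (b-e)^2 + (b-f)^2 + (c-d)^2 + (c-e)^2 + (c-f)^2 + (d-e)^2 + (d-f)^2 + (e-f)^2"
    unfolding p_def e2_def by (simp add: algebra_simps power2_eq_square)
  moreover have "0 \<le> (a-b)^2 + (a-c)^2 + (a-d)^2 + (a-e)^2 + (a-f)^2 + (b-c)^2 + (b-d)^2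
      + (b-e)^2 + (b-f)^2 + (c-d)^2 + (c-e)^2 + (c-f)^2 + (d-e)^2 + (d-f)^2 + (e-f)^2"
    by simp
  ultimately have e2_le: "12 * e2 \<le> 5 * p^2"
    by linarith
  let ?t = "\<lambda>u v w :: real. u * (v - w)^2 + v * (u - w)^2 + w * (u - v)^2"
  have "4 * p * e2 - 18 * e3 = ?t a b c + ?t a b d + ?t a b e + ?t a b f + ?t a c d + ?t a c e
      + ?t a c f + ?t a d e + ?t a d f + ?t a e f + ?t b c d + ?t b c e + ?t b c f + ?t b d e
      + ?t b d f + ?t b e f + ?t c d e + ?t c d f + ?t c e f + ?t d e f"
    unfolding p_def e2_def e3_def by (simp add: algebra_simps power2_eq_square)
  moreover have "0 \<le> ?t a b c + ?t a b d + ?t a b e + ?t a b f + ?t a c d + ?t a c e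
      + ?t a c f + ?t a d e + ?t a d f + ?t a e f + ?t b c d + ?t b c e + ?t b c f + ?t b d e
      + ?t b d f + ?t b e f + ?t c d e + ?t c d f + ?t c e f + ?t d e f"
    using assms(1-6) by (intro add_nonneg_nonneg mult_nonneg_nonneg; simp)
  ultimately have newton: "9 * e3 \<le> 2 * p * e2"
    by linarith
  have "0 \<le> p"
    using assms(1-6) by (simp add: p_def)
  from mult_left_mono[OF e2_le this] have "48 * (p * e2) \<le> 20 * p ^ 3"
    by (simp add: power3_eq_cube power2_eq_square algebra_simps)
  with newton show ?thesis
    by (simp add: algebra_simps)
qed

lemma e3_six_simplex_le:
  fixes a b c d e y :: real
  assumes "0 \<le> a" "0 \<le> b" "0 \<le> c" "0 \<le> d" "0 \<le> e" "0 \<le> y" "a + b + c + d + e + y = 1"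
  shows "a*b*c + a*b*d + a*b*e + a*c*d + a*c*e + a*d*e + b*c*d + b*c*e + b*d*e + c*d*e
    + y * (a*b + a*c + a*d + a*e + b*c + b*d + b*e + c*d + c*e + d*e) \<le> 5/54"
  using e3_six_le[OF assms(1-6)] assms(7) by (simp add: algebra_simps)

lemma elem_sym_card_5_le:
  fixes x :: "'a \<Rightarrow> real"
  assumes "card S = 5" "\<forall>i\<in>S. 0 \<le> x i" "0 \<le> y" "(\<Sum>i\<in>S. x i) + y = 1"
  shows "elem_sym 3 S x + y * elem_sym 2 S x \<le> 5/54"
proof -
  have "card S = Suc (Suc (Suc (Suc (Suc 0))))"
    using assms(1) by simp
  then obtain a b c d e where S: "S = {a, b, c, d, e}" and "distinct [a, b, c, d, e]"
    unfolding card_Suc_eq by fastforce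
  then have "elem_sym 3 S x = x a*x b*x c + x a*x b*x d + x a*x b*x e + x a*x c*x d + x a*x c*x e
      + x a*x d*x e + x b*x c*x d + x b*x c*x e + x b*x d*x e + x c*x d*x e"
    and "elem_sym 2 S x = x a*x b + x a*x c + x a*x d + x a*x e + x b*x c + x b*x d + x b*x e
      + x c*x d + x c*x e + x d*x e"
    and "(\<Sum>i\<in>S. x i) = x a + x b + x c + x d + x e"
    by (simp_all add: numeral_eq_Suc algebra_simps)
  then show ?thesis
    using assms(2-4) S by (simp only:) (rule e3_six_simplex_le; simp)
qed

lemma lagrangian_le:
  assumes "finite V" "V \<noteq> {}"
    and "\<And>x. \<forall>i\<in>V. 0 \<le> x i \<Longrightarrow> (\<Sum>i\<in>V. x i) = 1 \<Longrightarrow> (\<Sum>e\<in>E. \<Prod>i\<in>e. x i) \<le> c"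
  shows "lagrangian V E \<le> c"
proof -
  obtain v where "v \<in> V"
    using assms(2) by blast
  then have "(\<Sum>i\<in>V. if i = v then 1 else 0) = (1::real)"
    using assms(1) by simp
  then have "\<exists>x. (\<forall>i\<in>V. 0 \<le> x i) \<and> (\<Sum>i\<in>V. x i) = (1::real)"
    by (intro exI[of _ "\<lambda>i. if i = v then 1 else 0"]) simp
  then show ?thesis
    unfolding lagrangian_def using assms by (auto intro!: cSup_least)
qed

lemma contains_K43e_copy:
  assumes "distinct [b1, b2, b3, b4, p, q, r]" "{b1, b2, b3, b4, p, q, r} \<subseteq> V"
    and "{b1, b2, b3} \<in> E" "{b1, b2, b4} \<in> E" "{b1, b3, b4} \<in> E" "{b2, b3, b4} \<in> E"
    and "{p, q, r} \<in> E"
  shows "contains_copy K43e_V K43e_E V E"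
proof -
  define g where "g n = [b1, b2, b3, b4, p, q, r] ! (n - 1)" for n
  have V: "K43e_V = {1, 2, 3, 4, 5, 6, 7}"
    by (auto simp: K43e_V_def)
  have "inj_on g K43e_V"
    using assms(1) unfolding V g_def by (auto simp: inj_on_def)
  moreover have "g ` K43e_V \<subseteq> V" "\<forall>e\<in>K43e_E. g ` e \<in> E"
    using assms(2-7) by (simp_all add: V K43e_E_def g_def)
  ultimately show ?thesis
    unfolding contains_copy_def by blast
qed

lemma clique_meets_every_edge_twice:
  assumes "three_graph V E" "\<not> contains_copy K43e_V K43e_E V E"
    and "S \<subseteq> V" "finite S" "5 \<le> card S" "\<And>T. T \<subseteq> S \<Longrightarrow> card T = 3 \<Longrightarrow> T \<in> E"
    and "e \<in> E"
  shows "2 \<le> card (e \<inter> S)"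
proof (rule ccontr)
  assume "\<not> 2 \<le> card (e \<inter> S)"
  then have "4 \<le> card (S - e)"
    using assms(4,5) by (simp add: card_Diff_subset_Int Int_commute)
  then obtain B where "B \<subseteq> S - e" "card B = 4"
    by (meson obtain_subset_with_card_n)
  then have "B \<subseteq> S - e" "card B = Suc (Suc (Suc (Suc 0)))"
    by simp_all
  then obtain b1 b2 b3 b4 where B: "B = {b1, b2, b3, b4}" "distinct [b1, b2, b3, b4]"
    unfolding card_Suc_eq by fastforce
  have "card e = 3" "e \<subseteq> V"
    using assms(1,7) by (auto simp: three_graph_def)
  then obtain p q r where e: "e = {p, q, r}" "distinct [p, q, r]"
    by (auto simp: card_3_iff)
  have clique: "T \<in> E" if "T \<subseteq> B" "card T = 3" for T
    using that \<open>B \<subseteq> S - e\<close> assms(6) by blast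
  show False
  proof (rule notE[OF assms(2)], rule contains_K43e_copy)
    show "distinct [b1, b2, b3, b4, p, q, r]"
      using B e \<open>B \<subseteq> S - e\<close> by auto
    show "{b1, b2, b3, b4, p, q, r} \<subseteq> V"
      using B e \<open>B \<subseteq> S - e\<close> \<open>e \<subseteq> V\<close> assms(3) by auto
    show "{b1, b2, b3} \<in> E" "{b1, b2, b4} \<in> E" "{b1, b3, b4} \<in> E" "{b2, b3, b4} \<in> E"
      using B by (auto intro!: clique)
    show "{p, q, r} \<in> E"
      using assms(7) e by simp
  qed
qed

lemma triple_meeting_twice_outside:
  assumes "card e = 3" "2 \<le> card (e \<inter> S)" "\<not> e \<subseteq> S"
  obtains v where "v \<in> e" "v \<notin> S" "e = insert v (e \<inter> S)" "card (e \<inter> S) = 2"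
proof -
  obtain v where v: "v \<in> e" "v \<notin> S"
    using assms(3) by blast
  have "finite e"
    using assms(1) by (simp add: card_ge_0_finite)
  then have "card (e - {v}) = 2" "e \<inter> S \<subseteq> e - {v}"
    using assms(1) v by auto
  then have "e \<inter> S = e - {v}"
    using assms(2) \<open>finite e\<close> by (metis card_subset_eq finite_Diff le_antisym card_mono)
  then show ?thesis
    using v \<open>card (e - {v}) = 2\<close> by (intro that[of v]) auto
qed

lemma sum_cones_le:
  fixes x :: "'a \<Rightarrow> real"
  assumes "finite A" "finite \<P>" "\<forall>i\<in>A. 0 \<le> x i"
    and "\<forall>T\<in>\<P>. finite T \<and> A \<inter> T = {} \<and> (\<forall>i\<in>T. 0 \<le> x i)"
  shows "(\<Sum>T\<in>(\<lambda>(v, T). insert v T) ` (A \<times> \<P>). \<Prod>i\<in>T. x i)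
    \<le> (\<Sum>v\<in>A. x v) * (\<Sum>T\<in>\<P>. \<Prod>i\<in>T. x i)"
proof -
  let ?w = "\<lambda>T. \<Prod>i\<in>T. x i"
  have "(\<Sum>T\<in>(\<lambda>(v, T). insert v T) ` (A \<times> \<P>). ?w T)
      \<le> (\<Sum>vT\<in>A \<times> \<P>. (?w \<circ> (\<lambda>(v, T). insert v T)) vT)"
    using assms by (intro sum_image_le) (auto intro!: prod_nonneg)
  also have "\<dots> = (\<Sum>(v, T)\<in>A \<times> \<P>. x v * ?w T)"
    using assms(4) by (intro sum.cong refl) (force simp: disjoint_iff)
  also have "\<dots> = (\<Sum>v\<in>A. x v) * (\<Sum>T\<in>\<P>. ?w T)"
    by (simp add: sum_product sum.cartesian_product)
  finally show ?thesis .
qed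

lemma edge_sum_le_elem_sym:
  fixes x :: "'a \<Rightarrow> real"
  assumes "three_graph V E" "S \<subseteq> V" "\<forall>e\<in>E. 2 \<le> card (e \<inter> S)" "\<forall>i\<in>V. 0 \<le> x i"
  shows "(\<Sum>e\<in>E. \<Prod>i\<in>e. x i) \<le> elem_sym 3 S x + (\<Sum>v\<in>V - S. x v) * elem_sym 2 S x"
proof -
  let ?w = "\<lambda>T. \<Prod>i\<in>T. x i"
  define Triples where "Triples = {T. T \<subseteq> S \<and> card T = 3}"
  define Pairs where "Pairs = {T. T \<subseteq> S \<and> card T = 2}"
  define Cones where "Cones = (\<lambda>(v, T). insert v T) ` ((V - S) \<times> Pairs)"
  have "finite V" and edge: "\<And>e. e \<in> E \<Longrightarrow> e \<subseteq> V \<and> card e = 3"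
    using assms(1) by (auto simp: three_graph_def)
  then have fin: "finite S" "finite Pairs" "finite Triples" "finite Cones"
    using assms(2) by (auto simp: Pairs_def Triples_def Cones_def finite_subset)
  have w_nonneg: "0 \<le> ?w T" if "T \<subseteq> V" for T
    using assms(4) that by (auto intro: prod_nonneg)
  have in_V: "T \<subseteq> V" if "T \<in> Triples \<union> Cones" for T
    using that assms(2) by (auto simp: Triples_def Pairs_def Cones_def)
  have "E \<subseteq> Triples \<union> Cones"
  proof
    fix e assume "e \<in> E"
    then have e: "e \<subseteq> V" "card e = 3" "2 \<le> card (e \<inter> S)"
      using edge assms(3) by auto
    show "e \<in> Triples \<union> Cones"
    proof (cases "e \<subseteq> S")
      case True
      then show ?thesis using e by (simp add: Triples_def)
    next
      case False
      obtain v where "v \<in> e" "v \<notin> S" "e = insert v (e \<inter> S)" "card (e \<inter> S) = 2"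
        using triple_meeting_twice_outside[OF e(2,3) False] by blast
      moreover have "(v, e \<inter> S) \<in> (V - S) \<times> Pairs"
        using calculation e(1) by (auto simp: Pairs_def)
      ultimately show ?thesis
        unfolding Cones_def by (metis (no_types, lifting) UnI2 case_prod_conv image_eqI)
    qed
  qed
  then have "(\<Sum>e\<in>E. ?w e) \<le> (\<Sum>T\<in>Triples \<union> Cones. ?w T)"
    using fin in_V w_nonneg by (intro sum_mono2) auto
  also have "\<dots> \<le> (\<Sum>T\<in>Triples. ?w T) + (\<Sum>T\<in>Cones. ?w T)"
    using fin in_V w_nonneg by (simp add: sum_Un) (intro sum_nonneg, blast)
  finally have "(\<Sum>e\<in>E. ?w e) \<le> (\<Sum>T\<in>Triples. ?w T) + (\<Sum>T\<in>Cones. ?w T)" .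
  moreover have "(\<Sum>T\<in>Cones. ?w T) \<le> (\<Sum>v\<in>V - S. x v) * (\<Sum>T\<in>Pairs. ?w T)"
    unfolding Cones_def using fin \<open>finite V\<close> assms(2,4)
    by (intro sum_cones_le) (auto simp: Pairs_def finite_subset)
  ultimately show ?thesis
    by (simp add: elem_sym_def Triples_def Pairs_def)
qed

lemma lagrangian_le_if_edges_meet_twice:
  assumes "three_graph V E" "S \<subseteq> V" "card S = 5" "\<forall>e\<in>E. 2 \<le> card (e \<inter> S)"
  shows "lagrangian V E \<le> 5/54"
proof (rule lagrangian_le)
  show "finite V"
    using assms(1) by (simp add: three_graph_def)
  then show "V \<noteq> {}"
    using assms(2,3) by auto
  fix x :: "'a \<Rightarrow> real"
  assume x: "\<forall>i\<in>V. 0 \<le> x i" "(\<Sum>i\<in>V. x i) = 1"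
  then have "(\<Sum>i\<in>S. x i) + (\<Sum>i\<in>V - S. x i) = 1"
    using \<open>finite V\<close> assms(2) by (metis sum.subset_diff add.commute)
  moreover have "0 \<le> (\<Sum>i\<in>V - S. x i)"
    using x by (intro sum_nonneg) auto
  ultimately have "elem_sym 3 S x + (\<Sum>i\<in>V - S. x i) * elem_sym 2 S x \<le> 5/54"
    using assms(2,3) x by (intro elem_sym_card_5_le) auto
  then show "(\<Sum>e\<in>E. \<Prod>i\<in>e. x i) \<le> 5/54"
    using edge_sum_le_elem_sym[OF assms(1,2,4)] x by fastforce
qed

lemma contains_K53_copy_clique:
  assumes "contains_copy K53_V K53_E V E"
  obtains S where "S \<subseteq> V" "card S = 5" "\<And>T. T \<subseteq> S \<Longrightarrow> card T = 3 \<Longrightarrow> T \<in> E"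
proof -
  obtain f :: "nat \<Rightarrow> 'a" where f: "inj_on f {1..5}" "f ` {1..5} \<subseteq> V" "\<forall>I\<in>K53_E. f ` I \<in> E"
    using assms unfolding contains_copy_def K53_V_def by blast
  show ?thesis
  proof (rule that)
    show "f ` {1..5} \<subseteq> V" "card (f ` {1..5}) = 5"
      using f(1,2) by (simp_all add: card_image)
    fix T assume "T \<subseteq> f ` {1..5}" "card T = 3"
    then obtain I where "I \<subseteq> {1..5}" "T = f ` I" "card I = 3"
      using f(1) by (metis subset_imageE card_image inj_on_subset)
    then show "T \<in> E"
      using f(3) by (auto simp: K53_E_def)
  qed
qed

theorem claim5p2:
  fixes V :: "'a set" and E :: "'a set set"
  assumes "three_graph V E"
    and "dense V E"
    and "\<not> contains_copy K43e_V K43e_E V E"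
    and "lagrangian V E > sqrt 3 / 18"
  shows "\<not> contains_copy K53_V K53_E V E"
proof
  assume "contains_copy K53_V K53_E V E"
  then obtain S where S: "S \<subseteq> V" "card S = 5"
    and clique: "\<And>T. T \<subseteq> S \<Longrightarrow> card T = 3 \<Longrightarrow> T \<in> E"
    using contains_K53_copy_clique by blast
  have "\<forall>e\<in>E. 2 \<le> card (e \<inter> S)"
    using clique_meets_every_edge_twice[OF assms(1,3) S(1)] clique S(2) by (simp add: card_ge_0_finite)
  then have "lagrangian V E \<le> 5/54"
    using lagrangian_le_if_edges_meet_twice[OF assms(1) S] by blast
  moreover have "5/54 < sqrt 3 / 18"
    using real_less_rsqrt[of "5/3" 3] by (simp add: power2_eq_square)
  ultimately show False
    using assms(4) by linarith
qed

end
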